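(* Let $\mu_0$ and $\mu_1$ be probabilistic frames on $\mathbb{R}^d$ that are absolutely continuous with respect to Lebesgue measure, and suppose there is a linear map $r(x)=Ax$, with $A\in\mathbb{R}^{d\times d}$ positive semi-definite, such that $r_\#\mu_0=\mu_1$ and $r$ minimizes the 2-Wasserstein transport cost, i.e. $\int\|x-r(x)\|^2d\mu_0(x)=W_2^2(\mu_0,\mu_1)$. Then every measure $\mu_t=(h_t)_\#\mu_0$, $h_t(x)=(1-t)x+tr(x)$, $t\in[0,1]$, on the geodesic between $\mu_0$ and $\mu_1$ has support which spans $\mathbb{R}^d$, and is therefore a probabilistic frame.
   Context: A probabilistic frame is a probability measure on $\mathbb{R}^d$ with finite second moment whose support spans $\mathbb{R}^d$. $W_2^2(\mu_0,\mu_1)=\inf_\gamma\iint\|x-y\|^2d\gamma(x,y)$ over couplings $\gamma$ of $\mu_0,\mu_1$. $T_\#\mu$ denotes the pushforward of $\mu$ by $T$. *)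

theory Defs
  imports "HOL-Probability.Probability"
begin

definition msupport :: "'a::topological_space measure \<Rightarrow> 'a set" where
  "msupport M = {x. \<forall>U. open U \<longrightarrow> x \<in> U \<longrightarrow> emeasure M U > 0}"

definition prob_frame :: "'a::euclidean_space measure \<Rightarrow> bool" where
  "prob_frame M \<longleftrightarrow> prob_space M \<and> sets M = sets borel
     \<and> (\<integral>\<^sup>+ x. ennreal ((norm x)\<^sup>2) \<partial>M) < \<infinity>
     \<and> span (msupport M) = UNIV"

definition couplings :: "'a::euclidean_space measure \<Rightarrow> 'a measure \<Rightarrow> ('a \<times> 'a) measure set" where
  "couplings M N = {G. prob_space G \<and> sets G = sets borel
       \<and> distr G borel fst = M \<and> distr G borel snd = N}"

definition W2sq :: "'a::euclidean_space measure \<Rightarrow> 'a measure \<Rightarrow> ennreal" where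
  "W2sq M N = (INF G \<in> couplings M N. \<integral>\<^sup>+ p. ennreal ((norm (fst p - snd p))\<^sup>2) \<partial>G)"

end

theory Submission
  imports Defs
begin

text \<open>For \<open>t < 1\<close> the map \<open>h\<^sub>t x = (1 - t) x + t A x\<close> is injective, since
\<open>x \<bullet> h\<^sub>t x \<ge> (1 - t) \<parallel>x\<parallel>\<^sup>2\<close> by positive semi-definiteness of \<open>A\<close>, hence a linear bijection.
Being continuous it maps the support of \<open>\<mu>\<^sub>0\<close> into the support of its pushforward, and being
surjective it maps a spanning set onto a spanning set; being bounded it preserves finite second
moments. The endpoint \<open>t = 1\<close> is the frame \<open>\<mu>\<^sub>1\<close> itself.\<close>

lemma image_msupport_subset_msupport_distr:
  fixes M :: "'a::topological_space measure" and f :: "'a \<Rightarrow> 'b::topological_space"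
  assumes sets_M: "sets M = sets borel" and cont: "continuous_on UNIV f"
  shows "f ` msupport M \<subseteq> msupport (distr M borel f)"
proof
  fix y assume "y \<in> f ` msupport M"
  then obtain x where x: "x \<in> msupport M" and y: "y = f x" by auto
  have meas: "f \<in> borel_measurable M"
    using borel_measurable_continuous_onI[OF cont] measurable_cong_sets[OF sets_M refl] by blast
  have space_M: "space M = UNIV" using sets_eq_imp_space_eq[OF sets_M] by simp
  show "y \<in> msupport (distr M borel f)"
    unfolding msupport_def
  proof (intro CollectI allI impI)
    fix U :: "'b set" assume U: "open U" "y \<in> U"
    have "open (f -` U)" using cont U(1) by (simp add: continuous_on_open_vimage)
    with x U y have "emeasure M (f -` U) > 0" by (simp add: msupport_def)
    moreover have "emeasure (distr M borel f) U = emeasure M (f -` U)"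
      using U(1) meas space_M by (simp add: emeasure_distr)
    ultimately show "emeasure (distr M borel f) U > 0" by simp
  qed
qed

lemma span_msupport_distr_linear_surj:
  fixes M :: "'a::euclidean_space measure" and f :: "'a \<Rightarrow> 'b::euclidean_space"
  assumes "sets M = sets borel" and "span (msupport M) = UNIV" and "linear f" and "surj f"
  shows "span (msupport (distr M borel f)) = UNIV"
proof -
  have "UNIV = f ` span (msupport M)" using assms(2,4) by simp
  also have "\<dots> = span (f ` msupport M)" using assms(3) by (simp add: span_linear_image)
  also have "\<dots> \<subseteq> span (msupport (distr M borel f))"
    using assms(1,3) by (intro span_mono image_msupport_subset_msupport_distr)
      (simp_all add: linear_continuous_on linear_linear)
  finally show ?thesis by auto
qed

lemma borel_measurable_linear:
  fixes f :: "'a::euclidean_space \<Rightarrow> 'b::euclidean_space"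
  assumes "sets M = sets borel" and "linear f"
  shows "f \<in> borel_measurable M"
  using assms by (simp add: borel_measurable_continuous_onI linear_continuous_on linear_linear
      measurable_cong_sets[OF assms(1) refl])

lemma second_moment_distr_linear_finite:
  fixes M :: "'a::euclidean_space measure" and f :: "'a \<Rightarrow> 'b::euclidean_space"
  assumes sets_M: "sets M = sets borel" and lin: "linear f"
    and moment: "(\<integral>\<^sup>+ x. ennreal ((norm x)\<^sup>2) \<partial>M) < \<infinity>"
  shows "(\<integral>\<^sup>+ y. ennreal ((norm y)\<^sup>2) \<partial>distr M borel f) < \<infinity>"
proof -
  obtain B where B: "\<And>x. norm (f x) \<le> B * norm x"
    using linear_bounded_pos[OF lin] by blast
  have meas: "f \<in> borel_measurable M"
    using sets_M lin by (rule borel_measurable_linear)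
  have "(\<lambda>x::'a. (norm x)\<^sup>2) \<in> borel_measurable borel"
    by (intro borel_measurable_continuous_onI continuous_intros)
  then have norm_sq_meas: "(\<lambda>x::'a. ennreal ((norm x)\<^sup>2)) \<in> borel_measurable M"
    unfolding measurable_cong_sets[OF sets_M refl, of borel] by simp
  have bound: "ennreal ((norm (f x))\<^sup>2) \<le> ennreal (B\<^sup>2) * ennreal ((norm x)\<^sup>2)" for x
  proof -
    have "(norm (f x))\<^sup>2 \<le> B\<^sup>2 * (norm x)\<^sup>2"
      using power_mono[OF B[of x], of 2] by (simp add: power_mult_distrib)
    then show ?thesis by (simp add: ennreal_mult[symmetric] ennreal_leI)
  qed
  have "(\<integral>\<^sup>+ y. ennreal ((norm y)\<^sup>2) \<partial>distr M borel f) = (\<integral>\<^sup>+ x. ennreal ((norm (f x))\<^sup>2) \<partial>M)"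
    using meas by (simp add: nn_integral_distr)
  also have "\<dots> \<le> (\<integral>\<^sup>+ x. ennreal (B\<^sup>2) * ennreal ((norm x)\<^sup>2) \<partial>M)"
    by (intro nn_integral_mono bound)
  also have "\<dots> = ennreal (B\<^sup>2) * (\<integral>\<^sup>+ x. ennreal ((norm x)\<^sup>2) \<partial>M)"
    using norm_sq_meas by (rule nn_integral_cmult)
  also have "\<dots> < \<infinity>" using moment by (simp add: ennreal_mult_less_top)
  finally show ?thesis .
qed

lemma prob_frame_distr_linear_surj:
  fixes M :: "'a::euclidean_space measure" and f :: "'a \<Rightarrow> 'b::euclidean_space"
  assumes frame: "prob_frame M" and lin: "linear f" and "surj f"
  shows "prob_frame (distr M borel f)"
proof -
  have sets_M: "sets M = sets borel" using frame by (simp add: prob_frame_def)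
  have "f \<in> borel_measurable M"
    using sets_M lin by (rule borel_measurable_linear)
  then have "prob_space (distr M borel f)"
    using frame by (simp add: prob_frame_def prob_space.prob_space_distr)
  moreover have "span (msupport (distr M borel f)) = UNIV"
    using frame sets_M assms(2,3) by (simp add: prob_frame_def span_msupport_distr_linear_surj)
  moreover have "(\<integral>\<^sup>+ y. ennreal ((norm y)\<^sup>2) \<partial>distr M borel f) < \<infinity>"
    using frame sets_M lin
    by (intro second_moment_distr_linear_finite) (simp_all add: prob_frame_def)
  ultimately show ?thesis unfolding prob_frame_def by simp
qed

lemma linear_psd_interpolation:
  fixes A :: "real ^ 'n ^ 'n" and t :: real
  shows "linear (\<lambda>x. (1 - t) *\<^sub>R x + t *\<^sub>R (A *v x))"
  by (rule linearI) (simp_all add: algebra_simps)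

lemma inj_psd_interpolation:
  fixes A :: "real ^ 'n ^ 'n" and t :: real
  assumes psd: "\<forall>x. x \<bullet> (A *v x) \<ge> 0" and "0 \<le> t" "t < 1"
  shows "inj (\<lambda>x. (1 - t) *\<^sub>R x + t *\<^sub>R (A *v x))"
proof (rule linear_injective_0[OF linear_psd_interpolation, THEN iffD2], intro allI impI)
  fix x :: "real ^ 'n" assume zero: "(1 - t) *\<^sub>R x + t *\<^sub>R (A *v x) = 0"
  have "0 = x \<bullet> ((1 - t) *\<^sub>R x + t *\<^sub>R (A *v x))" using zero by simp
  also have "\<dots> = (1 - t) * (x \<bullet> x) + t * (x \<bullet> (A *v x))"
    by (simp add: inner_add_right)
  moreover have "t * (x \<bullet> (A *v x)) \<ge> 0" using psd \<open>0 \<le> t\<close> by simp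
  ultimately have "(1 - t) * (x \<bullet> x) \<le> 0" by linarith
  then have "x \<bullet> x \<le> 0" using \<open>t < 1\<close> by (simp add: mult_le_0_iff)
  then show "x = 0" by (metis inner_eq_zero_iff inner_ge_zero order_antisym)
qed

theorem mainTheorem11:
  fixes \<mu>0 \<mu>1 :: "(real ^ 'n) measure" and A :: "real ^ 'n ^ 'n"
  assumes "prob_frame \<mu>0" and "prob_frame \<mu>1"
    and "absolutely_continuous lborel \<mu>0" and "absolutely_continuous lborel \<mu>1"
    and "transpose A = A" and "\<forall>x. x \<bullet> (A *v x) \<ge> 0"
    and "distr \<mu>0 borel (\<lambda>x. A *v x) = \<mu>1"
    and "(\<integral>\<^sup>+ x. ennreal ((norm (x - A *v x))\<^sup>2) \<partial>\<mu>0) = W2sq \<mu>0 \<mu>1"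
  shows "\<forall>t\<in>{0..1::real}.
           span (msupport (distr \<mu>0 borel (\<lambda>x. (1 - t) *\<^sub>R x + t *\<^sub>R (A *v x)))) = UNIV
         \<and> prob_frame (distr \<mu>0 borel (\<lambda>x. (1 - t) *\<^sub>R x + t *\<^sub>R (A *v x)))"
proof
  fix t :: real assume t: "t \<in> {0..1}"
  let ?h = "\<lambda>x. (1 - t) *\<^sub>R x + t *\<^sub>R (A *v x)"
  have "prob_frame (distr \<mu>0 borel ?h)"
  proof (cases "t = 1")
    case True
    then show ?thesis using assms(2,7) by simp
  next
    case False
    with t have "inj ?h" using inj_psd_interpolation[OF assms(6)] by simp
    then have "surj ?h" using linear_psd_interpolation linear_injective_imp_surjective by blast
    then show ?thesis using prob_frame_distr_linear_surj[OF assms(1) linear_psd_interpolation] by blast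
  qed
  then show "span (msupport (distr \<mu>0 borel ?h)) = UNIV \<and> prob_frame (distr \<mu>0 borel ?h)"
    by (simp add: prob_frame_def)
qed

end
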